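(* Let $p\ge5$ be prime and let $H\le{\rm AGL}(1,p)$ consist of all maps $x\mapsto ax+b$ with $a$ a nonzero quadratic residue modulo $p$ and $b\in\mathbb F_p$. Then $H\wr S_2$, in the product action on $\mathbb F_p^2$, is a primitive group of degree $p^2$ all of whose elements are imprimitive permutations, and it contains the normal subgroup $H\times H$ of index $2$, which is imprimitive.
   Context: For $H\le{\rm Sym}(\Delta)$, $H\wr S_2$ in product action acts on $\Delta^2$ by applying elements of $H$ coordinatewise and possibly swapping the two coordinates. A permutation of a set $\Omega$ of size $n$ is imprimitive if it preserves a partition of $\Omega$ into blocks of equal size $m$ with $1<m<n$; a transitive group is imprimitive if it preserves such a partition. *)

theory Defs
  imports "HOL-Number_Theory.Number_Theory" "HOL-Algebra.Algebra" "HOL-Library.Disjoint_Sets"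
begin

definition Fp :: "int \<Rightarrow> int set" where
  "Fp p = {0..<p}"

definition Omega :: "int \<Rightarrow> (int \<times> int) set" where
  "Omega p = Fp p \<times> Fp p"

definition Hmaps :: "int \<Rightarrow> (int \<Rightarrow> int) set" where
  "Hmaps p = {(\<lambda>x. (a * x + b) mod p) | a b.
      a \<in> {1..p-1} \<and> QuadRes p a \<and> b \<in> Fp p}"

text \<open>Permutations of Omega are extended by the identity outside Omega.\<close>
definition coordwise :: "int \<Rightarrow> (int \<Rightarrow> int) \<Rightarrow> (int \<Rightarrow> int) \<Rightarrow> (int \<times> int \<Rightarrow> int \<times> int)" where
  "coordwise p h1 h2 = (\<lambda>(x, y). if (x, y) \<in> Omega p then (h1 x, h2 y) else (x, y))"

definition swapped :: "int \<Rightarrow> (int \<Rightarrow> int) \<Rightarrow> (int \<Rightarrow> int) \<Rightarrow> (int \<times> int \<Rightarrow> int \<times> int)" where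
  "swapped p h1 h2 = (\<lambda>(x, y). if (x, y) \<in> Omega p then (h1 y, h2 x) else (x, y))"

definition base_group :: "int \<Rightarrow> (int \<times> int \<Rightarrow> int \<times> int) set" where
  "base_group p = {coordwise p h1 h2 | h1 h2. h1 \<in> Hmaps p \<and> h2 \<in> Hmaps p}"

definition wreath_group :: "int \<Rightarrow> (int \<times> int \<Rightarrow> int \<times> int) set" where
  "wreath_group p = base_group p \<union> {swapped p h1 h2 | h1 h2. h1 \<in> Hmaps p \<and> h2 \<in> Hmaps p}"

definition perm_grp :: "('a \<Rightarrow> 'a) set \<Rightarrow> ('a \<Rightarrow> 'a) monoid" where
  "perm_grp S = \<lparr>carrier = S, mult = (\<circ>), one = id\<rparr>"

definition block_system :: "'a set \<Rightarrow> 'a set set \<Rightarrow> nat \<Rightarrow> bool" where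
  "block_system \<Omega> P m \<longleftrightarrow> partition_on \<Omega> P \<and> (\<forall>B\<in>P. card B = m) \<and> 1 < m \<and> m < card \<Omega>"

definition preserves :: "('a \<Rightarrow> 'a) \<Rightarrow> 'a set set \<Rightarrow> bool" where
  "preserves g P \<longleftrightarrow> (\<forall>B\<in>P. g ` B \<in> P)"

definition imprimitive_perm :: "'a set \<Rightarrow> ('a \<Rightarrow> 'a) \<Rightarrow> bool" where
  "imprimitive_perm \<Omega> g \<longleftrightarrow> (\<exists>P m. block_system \<Omega> P m \<and> preserves g P)"

definition transitive_on :: "'a set \<Rightarrow> ('a \<Rightarrow> 'a) set \<Rightarrow> bool" where
  "transitive_on \<Omega> G \<longleftrightarrow> (\<forall>x\<in>\<Omega>. \<forall>y\<in>\<Omega>. \<exists>g\<in>G. g x = y)"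

definition imprimitive_group :: "'a set \<Rightarrow> ('a \<Rightarrow> 'a) set \<Rightarrow> bool" where
  "imprimitive_group \<Omega> G \<longleftrightarrow> transitive_on \<Omega> G \<and>
     (\<exists>P m. block_system \<Omega> P m \<and> (\<forall>g\<in>G. preserves g P))"

definition primitive_group :: "'a set \<Rightarrow> ('a \<Rightarrow> 'a) set \<Rightarrow> bool" where
  "primitive_group \<Omega> G \<longleftrightarrow> transitive_on \<Omega> G \<and>
     \<not> (\<exists>P m. block_system \<Omega> P m \<and> (\<forall>g\<in>G. preserves g P))"

end

theory Submission
  imports Defs
begin

text \<open>Products and inverses of nonzero squares mod p are squares, so the maps x \<mapsto> a x + b
  with a a nonzero square form a group H, and H \<wr> S_2 is a group in which the product of
  two coordinate-swapping elements lies in H \<times> H; hence H \<times> H has index two and is normal.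

  Every element preserves a partition of F_p^2 into parallel lines: elements of H \<times> H
  preserve the rows, and (x, y) \<mapsto> (a1 y + b1, a2 x + b2) preserves the lines
  x + l y = const for l^2 = a1 / a2, which exists since a ratio of squares is a square.

  Conversely, a block through 0 of a block system of the whole group is stable under all
  translations, the coordinate swap and (x, y) \<mapsto> (4 x, y). Such a set with a point other than 0
  contains a nonzero point of an axis, hence that axis, both axes, and finally all of F_p^2.\<close>

lemma preserves_if_blocks_map_into_blocks:
  assumes inj: "inj_on g (\<Union>P)" and blocks: "\<And>B. B \<in> P \<Longrightarrow> finite B \<and> card B = m"
    and into: "\<And>B. B \<in> P \<Longrightarrow> \<exists>C\<in>P. g ` B \<subseteq> C"
  shows "preserves g P"
  unfolding preserves_def
proof
  fix B assume B: "B \<in> P"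
  then obtain C where C: "C \<in> P" "g ` B \<subseteq> C" using into by blast
  have "card (g ` B) = card C"
    using card_image[OF inj_on_subset[OF inj]] B C blocks by auto
  then have "g ` B = C" using card_subset_eq[of C "g ` B"] C blocks by simp
  with C show "g ` B \<in> P" by simp
qed

lemma preserved_block_fixed:
  assumes "partition_on \<Omega> P" "preserves g P" "B \<in> P" "z \<in> B" "g z \<in> B"
  shows "g ` B = B"
proof -
  have "g ` B \<in> P" using assms(2,3) unfolding preserves_def by blast
  moreover have "g z \<in> g ` B \<inter> B" using assms(4,5) by blast
  ultimately show ?thesis using disjointD[OF partition_onD2[OF assms(1)] _ assms(3)] by blast
qed

context group
begin

lemma notin_subgroup_inv:
  assumes "subgroup H G" "x \<in> carrier G" "x \<notin> H"
  shows "inv x \<notin> H"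
proof
  assume "inv x \<in> H"
  then have "inv (inv x) \<in> H" by (rule subgroup.m_inv_closed[OF assms(1)])
  with assms(2,3) show False by simp
qed

lemma notin_subgroup_mult:
  assumes H: "subgroup H G" and x: "x \<in> carrier G" "x \<notin> H" and h: "h \<in> H"
  shows "x \<otimes> h \<notin> H" "h \<otimes> x \<notin> H"
proof -
  have hG: "h \<in> carrier G" using H h by (rule subgroup.mem_carrier)
  show "x \<otimes> h \<notin> H"
  proof
    assume "x \<otimes> h \<in> H"
    then have "x \<otimes> h \<otimes> inv h \<in> H" using H h by (simp add: subgroup.m_closed subgroup.m_inv_closed)
    with x hG show False by (simp add: m_assoc)
  qed
  show "h \<otimes> x \<notin> H"
  proof
    assume "h \<otimes> x \<in> H"
    then have "inv h \<otimes> (h \<otimes> x) \<in> H" using H h by (simp add: subgroup.m_closed subgroup.m_inv_closed)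
    with x hG show False by (simp add: m_assoc[symmetric])
  qed
qed

text \<open>The hypothesis on products of elements outside \<open>H\<close> says that \<open>H\<close> has index at most two.\<close>

lemma normal_if_outside_products_inside:
  assumes H: "subgroup H G"
    and outside: "\<And>a b. a \<in> carrier G - H \<Longrightarrow> b \<in> carrier G - H \<Longrightarrow> a \<otimes> b \<in> H"
  shows "H \<lhd> G"
  unfolding normal_inv_iff
proof (intro conjI ballI)
  fix x h assume x: "x \<in> carrier G" and h: "h \<in> H"
  have hG: "h \<in> carrier G" using H h by (rule subgroup.mem_carrier)
  show "x \<otimes> h \<otimes> inv x \<in> H"
  proof (cases "x \<in> H")
    case True
    then show ?thesis using H h by (simp add: subgroup.m_closed subgroup.m_inv_closed)
  next
    case False
    then show ?thesis
      using outside x hG notin_subgroup_mult(1)[OF H x False h] notin_subgroup_inv[OF H x False]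
      by simp
  qed
qed (rule H)

lemma card_rcosets_if_outside_products_inside:
  assumes H: "subgroup H G"
    and outside: "\<And>a b. a \<in> carrier G - H \<Longrightarrow> b \<in> carrier G - H \<Longrightarrow> a \<otimes> b \<in> H"
    and proper: "carrier G - H \<noteq> {}"
  shows "card (rcosets H) = 2"
proof -
  have coset_outside: "H #> x = carrier G - H" if x: "x \<in> carrier G" "x \<notin> H" for x
  proof
    show "H #> x \<subseteq> carrier G - H"
      using notin_subgroup_mult(2)[OF H x] x subgroup.mem_carrier[OF H]
      by (auto simp: r_coset_def)
    show "carrier G - H \<subseteq> H #> x"
    proof
      fix k assume k: "k \<in> carrier G - H"
      have "k \<otimes> inv x \<in> H" using outside k notin_subgroup_inv[OF H x] x by simp
      moreover have "k = k \<otimes> inv x \<otimes> x" using k x by (simp add: m_assoc)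
      ultimately show "k \<in> H #> x" unfolding r_coset_def by blast
    qed
  qed
  have "rcosets H = {H, carrier G - H}"
  proof
    show "rcosets H \<subseteq> {H, carrier G - H}"
      unfolding RCOSETS_def using coset_join2[OF _ H] coset_outside by blast
    have "H #> \<one> = H" using coset_join2[OF _ H] subgroup.one_closed[OF H] by simp
    then show "{H, carrier G - H} \<subseteq> rcosets H"
      unfolding RCOSETS_def using proper coset_outside by blast
  qed
  moreover have "H \<noteq> carrier G - H" using subgroup.one_closed[OF H] by blast
  ultimately show ?thesis by simp
qed

end

lemma mod_in_Fp: "0 < p \<Longrightarrow> x mod p \<in> Fp p"
  by (simp add: Fp_def)

lemma card_Omega: "0 \<le> p \<Longrightarrow> card (Omega p) = nat (p ^ 2)"
  by (simp add: Omega_def Fp_def card_cartesian_product power2_eq_square nat_mult_distrib)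

definition affine :: "int \<Rightarrow> int \<Rightarrow> int \<Rightarrow> int \<Rightarrow> int" where
  "affine p a b = (\<lambda>x. (a * x + b) mod p)"

lemma Hmaps_eq_affine: "Hmaps p = {affine p a b | a b. a \<in> {1..p-1} \<and> QuadRes p a \<and> b \<in> Fp p}"
  unfolding Hmaps_def affine_def by simp

lemma cong_affine: "[affine p a b x = a * x + b] (mod p)"
  by (simp add: affine_def)

lemma affine_cong:
  assumes "[a = a'] (mod p)" "[b = b'] (mod p)"
  shows "affine p a b = affine p a' b'"
proof
  fix x
  have "[a * x + b = a' * x + b'] (mod p)" using assms by (intro cong_add cong_scalar_right)
  then show "affine p a b x = affine p a' b' x" by (simp add: affine_def cong_def)
qed

lemma affine_comp: "affine p a b \<circ> affine p u v = affine p (a * u) (a * v + b)"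
proof
  fix x
  have "[a * affine p u v x + b = a * (u * x + v) + b] (mod p)"
    by (intro cong_add cong_scalar_left cong_affine cong_refl)
  then show "(affine p a b \<circ> affine p u v) x = affine p (a * u) (a * v + b) x"
    by (simp add: affine_def cong_def algebra_simps)
qed

lemma affine_one_zero_on_Fp: "x \<in> Fp p \<Longrightarrow> affine p 1 0 x = x"
  by (simp add: affine_def Fp_def)

lemma QuadRes_mult: "QuadRes p a \<Longrightarrow> QuadRes p b \<Longrightarrow> QuadRes p (a * b)"
  unfolding QuadRes_def by (metis cong_mult power_mult_distrib)

lemma QuadRes_cong: "[a = a'] (mod p) \<Longrightarrow> QuadRes p a \<Longrightarrow> QuadRes p a'"
  unfolding QuadRes_def using cong_trans by blast

lemma QuadRes_square: "QuadRes p (x ^ 2)"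
  unfolding QuadRes_def by (rule exI[of _ x]) simp

locale prime_modulus =
  fixes p :: int
  assumes prime: "Factorial_Ring.prime p"
begin

lemma gt_one: "p > 1"
  using prime by (simp add: prime_int_iff)

lemma pos: "p > 0"
  using gt_one by simp

lemma inverse_mod:
  assumes "\<not> p dvd a"
  obtains a' where "[a * a' = 1] (mod p)" "\<not> p dvd a'"
proof -
  have "coprime a p" using prime_imp_coprime[OF prime assms] by (simp add: coprime_commute)
  then obtain a' where a': "[a * a' = 1] (mod p)" using cong_solve_coprime_int by blast
  moreover have "\<not> p dvd a'"
    using a' gt_one cong_dvd_iff[OF a'] by (auto simp: zdvd_not_zless)
  ultimately show ?thesis using that by blast
qed

lemma square_ratio:
  assumes "\<not> p dvd a2" "QuadRes p a1" "QuadRes p a2"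
  obtains l where "[a1 = l ^ 2 * a2] (mod p)"
proof -
  obtain y1 where y1: "[y1 ^ 2 = a1] (mod p)" using assms(2) unfolding QuadRes_def by blast
  obtain y2 where y2: "[y2 ^ 2 = a2] (mod p)" using assms(3) unfolding QuadRes_def by blast
  have "\<not> p dvd y2"
  proof
    assume "p dvd y2"
    then have "p dvd y2 ^ 2" by (simp add: power2_eq_square)
    with assms(1) cong_dvd_iff[OF y2] show False by simp
  qed
  then obtain w where w: "[y2 * w = 1] (mod p)" by (rule inverse_mod)
  have "[(y1 * w) ^ 2 * a2 = (y1 * w) ^ 2 * y2 ^ 2] (mod p)"
    using cong_sym[OF y2] by (rule cong_scalar_left)
  also have "(y1 * w) ^ 2 * y2 ^ 2 = y1 ^ 2 * (y2 * w) ^ 2" by (simp add: power_mult_distrib ac_simps)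
  also have "[y1 ^ 2 * (y2 * w) ^ 2 = y1 ^ 2 * 1 ^ 2] (mod p)"
    using cong_pow[OF w] by (rule cong_scalar_left)
  also have "[y1 ^ 2 * 1 ^ 2 = a1] (mod p)" using y1 by simp
  finally show ?thesis by (rule that[OF cong_sym])
qed

lemma affine_in_Hmaps:
  assumes "\<not> p dvd a" "QuadRes p a"
  shows "affine p a b \<in> Hmaps p"
proof -
  have "a mod p \<in> {1..p-1}"
  proof -
    have "0 \<le> a mod p" "a mod p < p" "a mod p \<noteq> 0"
      using assms(1) gt_one by (simp_all add: dvd_eq_mod_eq_0)
    then show ?thesis by simp
  qed
  moreover have "QuadRes p (a mod p)" using QuadRes_cong[OF _ assms(2)] by simp
  moreover have "affine p a b = affine p (a mod p) (b mod p)" by (rule affine_cong) simp_all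
  moreover have "b mod p \<in> Fp p" using gt_one by (simp add: mod_in_Fp)
  ultimately show ?thesis unfolding Hmaps_eq_affine by blast
qed

lemma HmapsE:
  assumes "h \<in> Hmaps p"
  obtains a b where "h = affine p a b" "\<not> p dvd a" "QuadRes p a"
  using assms zdvd_not_zless[of _ p] unfolding Hmaps_eq_affine by fastforce

lemma Hmaps_range: "h \<in> Hmaps p \<Longrightarrow> h \<in> Fp p \<rightarrow> Fp p"
  using gt_one by (elim HmapsE) (simp add: affine_def mod_in_Fp)

lemma Hmaps_comp:
  assumes "h \<in> Hmaps p" "k \<in> Hmaps p"
  shows "h \<circ> k \<in> Hmaps p"
proof -
  obtain a b where h: "h = affine p a b" "\<not> p dvd a" "QuadRes p a" using assms(1) by (rule HmapsE)
  obtain u v where k: "k = affine p u v" "\<not> p dvd u" "QuadRes p u" using assms(2) by (rule HmapsE)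
  show ?thesis
    using h k prime by (simp add: affine_comp affine_in_Hmaps QuadRes_mult prime_dvd_mult_iff)
qed

lemma translation_in_Hmaps: "affine p 1 b \<in> Hmaps p"
proof (rule affine_in_Hmaps)
  show "\<not> p dvd 1" using gt_one by (simp add: zdvd_not_zless)
  show "QuadRes p 1" using QuadRes_square[of p 1] by simp
qed

lemma Hmaps_inverse:
  assumes "h \<in> Hmaps p"
  obtains h' where "h' \<in> Hmaps p" "h' \<circ> h = affine p 1 0" "h \<circ> h' = affine p 1 0"
proof -
  obtain a b where h: "h = affine p a b" "\<not> p dvd a" "QuadRes p a" using assms by (rule HmapsE)
  obtain a' where a': "[a * a' = 1] (mod p)" "\<not> p dvd a'" using h(2) by (rule inverse_mod)
  \<comment> \<open>The inverse \<open>a'\<close> of a square \<open>a\<close> is the square \<open>a'\<^sup>2 a\<close>.\<close>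
  have "[a' ^ 2 * a = a' * (a * a')] (mod p)" by (simp add: power2_eq_square algebra_simps)
  also have "[a' * (a * a') = a' * 1] (mod p)" using a'(1) by (rule cong_scalar_left)
  finally have "QuadRes p a'" using QuadRes_mult[OF QuadRes_square h(3)] QuadRes_cong by simp
  then have inv: "affine p a' (- a' * b) \<in> Hmaps p" by (rule affine_in_Hmaps[OF a'(2)])
  have "affine p a' (- a' * b) \<circ> h = affine p 1 0"
    unfolding h affine_comp using a'(1) by (intro affine_cong) (simp_all add: algebra_simps)
  moreover have "[a * (- a' * b) + b = 0] (mod p)"
  proof -
    have "[a * (- a' * b) + b = - (a * a') * b + b] (mod p)" by (simp add: algebra_simps)
    also have "[- (a * a') * b + b = - 1 * b + b] (mod p)"
      using a'(1) by (intro cong_add cong_scalar_right cong_minus_minus_iff[THEN iffD2]) simp_all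
    finally show ?thesis by simp
  qed
  then have "h \<circ> affine p a' (- a' * b) = affine p 1 0"
    unfolding h affine_comp using a'(1) by (intro affine_cong) simp_all
  ultimately show ?thesis using that inv by blast
qed

end

definition swapped_part :: "int \<Rightarrow> (int \<times> int \<Rightarrow> int \<times> int) set" where
  "swapped_part p = {swapped p h1 h2 | h1 h2. h1 \<in> Hmaps p \<and> h2 \<in> Hmaps p}"

lemma wreath_group_eq: "wreath_group p = base_group p \<union> swapped_part p"
  by (simp add: wreath_group_def swapped_part_def)

lemma base_groupE:
  assumes "g \<in> base_group p"
  obtains h1 h2 where "h1 \<in> Hmaps p" "h2 \<in> Hmaps p" "g = coordwise p h1 h2"
  using assms unfolding base_group_def by blast

lemma swapped_partE:
  assumes "g \<in> swapped_part p"
  obtains h1 h2 where "h1 \<in> Hmaps p" "h2 \<in> Hmaps p" "g = swapped p h1 h2"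
  using assms unfolding swapped_part_def by blast

lemma coordwise_in_base_group: "h1 \<in> Hmaps p \<Longrightarrow> h2 \<in> Hmaps p \<Longrightarrow> coordwise p h1 h2 \<in> base_group p"
  unfolding base_group_def by blast

lemma swapped_in_swapped_part: "h1 \<in> Hmaps p \<Longrightarrow> h2 \<in> Hmaps p \<Longrightarrow> swapped p h1 h2 \<in> swapped_part p"
  unfolding swapped_part_def by blast

lemma coordwise_comp_coordwise:
  "k1 \<in> Fp p \<rightarrow> Fp p \<Longrightarrow> k2 \<in> Fp p \<rightarrow> Fp p \<Longrightarrow>
   coordwise p h1 h2 \<circ> coordwise p k1 k2 = coordwise p (h1 \<circ> k1) (h2 \<circ> k2)"
  by (auto intro!: ext simp: coordwise_def Omega_def Pi_iff)

lemma coordwise_comp_swapped: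
  "k1 \<in> Fp p \<rightarrow> Fp p \<Longrightarrow> k2 \<in> Fp p \<rightarrow> Fp p \<Longrightarrow>
   coordwise p h1 h2 \<circ> swapped p k1 k2 = swapped p (h1 \<circ> k1) (h2 \<circ> k2)"
  by (auto intro!: ext simp: coordwise_def swapped_def Omega_def Pi_iff)

lemma swapped_comp_coordwise:
  "k1 \<in> Fp p \<rightarrow> Fp p \<Longrightarrow> k2 \<in> Fp p \<rightarrow> Fp p \<Longrightarrow>
   swapped p h1 h2 \<circ> coordwise p k1 k2 = swapped p (h1 \<circ> k2) (h2 \<circ> k1)"
  by (auto intro!: ext simp: coordwise_def swapped_def Omega_def Pi_iff)

lemma swapped_comp_swapped:
  "k1 \<in> Fp p \<rightarrow> Fp p \<Longrightarrow> k2 \<in> Fp p \<rightarrow> Fp p \<Longrightarrow>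
   swapped p h1 h2 \<circ> swapped p k1 k2 = coordwise p (h1 \<circ> k2) (h2 \<circ> k1)"
  by (auto intro!: ext simp: coordwise_def swapped_def Omega_def Pi_iff)

lemma coordwise_identity: "coordwise p (affine p 1 0) (affine p 1 0) = id"
  by (auto simp: coordwise_def Omega_def affine_one_zero_on_Fp)

context prime_modulus
begin

lemma base_comp_base: "f \<in> base_group p \<Longrightarrow> g \<in> base_group p \<Longrightarrow> f \<circ> g \<in> base_group p"
  by (elim base_groupE)
    (simp add: coordwise_comp_coordwise Hmaps_range Hmaps_comp coordwise_in_base_group)

lemma base_comp_swapped: "f \<in> base_group p \<Longrightarrow> g \<in> swapped_part p \<Longrightarrow> f \<circ> g \<in> swapped_part p"
  by (elim base_groupE swapped_partE)
    (simp add: coordwise_comp_swapped Hmaps_range Hmaps_comp swapped_in_swapped_part)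

lemma swapped_comp_base: "f \<in> swapped_part p \<Longrightarrow> g \<in> base_group p \<Longrightarrow> f \<circ> g \<in> swapped_part p"
  by (elim base_groupE swapped_partE)
    (simp add: swapped_comp_coordwise Hmaps_range Hmaps_comp swapped_in_swapped_part)

lemma swapped_comp_swapped_in_base: "f \<in> swapped_part p \<Longrightarrow> g \<in> swapped_part p \<Longrightarrow> f \<circ> g \<in> base_group p"
  by (elim swapped_partE)
    (simp add: swapped_comp_swapped Hmaps_range Hmaps_comp coordwise_in_base_group)

lemma id_in_base_group: "id \<in> base_group p"
  using coordwise_in_base_group[OF translation_in_Hmaps[of 0] translation_in_Hmaps[of 0]]
  unfolding coordwise_identity .

lemma base_group_inverse:
  assumes "g \<in> base_group p"
  obtains f where "f \<in> base_group p" "f \<circ> g = id" "g \<circ> f = id"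
proof -
  obtain h1 h2 where h: "h1 \<in> Hmaps p" "h2 \<in> Hmaps p" "g = coordwise p h1 h2"
    using assms by (rule base_groupE)
  obtain k1 where k1: "k1 \<in> Hmaps p" "k1 \<circ> h1 = affine p 1 0" "h1 \<circ> k1 = affine p 1 0"
    using h(1) by (rule Hmaps_inverse)
  obtain k2 where k2: "k2 \<in> Hmaps p" "k2 \<circ> h2 = affine p 1 0" "h2 \<circ> k2 = affine p 1 0"
    using h(2) by (rule Hmaps_inverse)
  show ?thesis
    using that[OF coordwise_in_base_group[OF k1(1) k2(1)]] h k1 k2
    by (simp add: coordwise_comp_coordwise Hmaps_range coordwise_identity)
qed

lemma swapped_part_inverse:
  assumes "g \<in> swapped_part p"
  obtains f where "f \<in> swapped_part p" "f \<circ> g = id" "g \<circ> f = id"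
proof -
  obtain h1 h2 where h: "h1 \<in> Hmaps p" "h2 \<in> Hmaps p" "g = swapped p h1 h2"
    using assms by (rule swapped_partE)
  obtain k1 where k1: "k1 \<in> Hmaps p" "k1 \<circ> h1 = affine p 1 0" "h1 \<circ> k1 = affine p 1 0"
    using h(1) by (rule Hmaps_inverse)
  obtain k2 where k2: "k2 \<in> Hmaps p" "k2 \<circ> h2 = affine p 1 0" "h2 \<circ> k2 = affine p 1 0"
    using h(2) by (rule Hmaps_inverse)
  show ?thesis
    using that[OF swapped_in_swapped_part[OF k2(1) k1(1)]] h k1 k2
    by (simp add: swapped_comp_swapped Hmaps_range coordwise_identity)
qed

lemma id_in_wreath_group: "id \<in> wreath_group p"
  using id_in_base_group unfolding wreath_group_eq by blast

lemma wreath_group_inverse: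
  assumes "g \<in> wreath_group p"
  obtains f where "f \<in> wreath_group p" "f \<circ> g = id" "g \<circ> f = id"
  using assms base_group_inverse swapped_part_inverse unfolding wreath_group_eq by blast

lemma wreath_comp_closed: "f \<in> wreath_group p \<Longrightarrow> g \<in> wreath_group p \<Longrightarrow> f \<circ> g \<in> wreath_group p"
  unfolding wreath_group_eq
  using base_comp_base base_comp_swapped swapped_comp_base swapped_comp_swapped_in_base by blast

lemma group_wreath_group: "group (perm_grp (wreath_group p))"
proof (rule groupI)
  fix g assume "g \<in> carrier (perm_grp (wreath_group p))"
  then obtain f where "f \<in> wreath_group p" "f \<circ> g = id"
    unfolding perm_grp_def by (auto elim: wreath_group_inverse)
  then show "\<exists>f\<in>carrier (perm_grp (wreath_group p)). f \<otimes>\<^bsub>perm_grp (wreath_group p)\<^esub> g = \<one>\<^bsub>perm_grp (wreath_group p)\<^esub>"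
    unfolding perm_grp_def by auto
qed (auto simp: perm_grp_def wreath_comp_closed id_in_wreath_group o_assoc)

lemma subgroup_base_group: "subgroup (base_group p) (perm_grp (wreath_group p))"
proof (rule group.subgroupI[OF group_wreath_group])
  have base: "base_group p \<subseteq> wreath_group p" unfolding wreath_group_eq by blast
  then show "base_group p \<subseteq> carrier (perm_grp (wreath_group p))" by (simp add: perm_grp_def)
  show "base_group p \<noteq> {}" using id_in_base_group by blast
  fix f g assume f: "f \<in> base_group p"
  obtain f' where f': "f' \<in> base_group p" "f' \<circ> f = id" using f by (rule base_group_inverse)
  have "inv\<^bsub>perm_grp (wreath_group p)\<^esub> f = f'"
    using f f' base by (intro group.inv_equality[OF group_wreath_group]) (auto simp: perm_grp_def)
  then show "inv\<^bsub>perm_grp (wreath_group p)\<^esub> f \<in> base_group p" using f' by simp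
  assume "g \<in> base_group p"
  then show "f \<otimes>\<^bsub>perm_grp (wreath_group p)\<^esub> g \<in> base_group p"
    using f base_comp_base by (simp add: perm_grp_def)
qed

lemma id_notin_swapped_part: "id \<notin> swapped_part p"
proof
  assume "id \<in> swapped_part p"
  then obtain h1 h2 where h: "id = swapped p h1 h2" by (rule swapped_partE)
  have "(0, 1) \<in> Omega p" "(1, 1) \<in> Omega p" using gt_one by (auto simp: Omega_def Fp_def)
  then have "(0, 1) = (h1 1, h2 0)" "(1, 1) = (h1 1, h2 1)"
    using fun_cong[OF h, of "(0, 1)"] fun_cong[OF h, of "(1, 1)"] by (simp_all add: swapped_def)
  then show False by simp
qed

lemma carrier_minus_base_group:
  "carrier (perm_grp (wreath_group p)) - base_group p = swapped_part p"
proof -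
  have "base_group p \<inter> swapped_part p = {}"
  proof (intro equals0I)
    fix g assume g: "g \<in> base_group p \<inter> swapped_part p"
    then obtain f where "f \<in> base_group p" "f \<circ> g = id" by (blast elim: base_group_inverse)
    then show False using base_comp_swapped[of f g] g id_notin_swapped_part by auto
  qed
  moreover have "carrier (perm_grp (wreath_group p)) = base_group p \<union> swapped_part p"
    by (simp add: perm_grp_def wreath_group_eq)
  ultimately show ?thesis by blast
qed

lemma outside_base_group_mult:
  assumes "a \<in> carrier (perm_grp (wreath_group p)) - base_group p"
    and "b \<in> carrier (perm_grp (wreath_group p)) - base_group p"
  shows "a \<otimes>\<^bsub>perm_grp (wreath_group p)\<^esub> b \<in> base_group p"
  using assms unfolding carrier_minus_base_group
  by (simp add: perm_grp_def swapped_comp_swapped_in_base)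

lemma normal_base_group: "base_group p \<lhd> perm_grp (wreath_group p)"
  using group.normal_if_outside_products_inside[OF group_wreath_group subgroup_base_group
      outside_base_group_mult] .

lemma card_rcosets_base_group: "card (rcosets\<^bsub>perm_grp (wreath_group p)\<^esub> (base_group p)) = 2"
proof (rule group.card_rcosets_if_outside_products_inside[OF group_wreath_group subgroup_base_group
      outside_base_group_mult])
  show "carrier (perm_grp (wreath_group p)) - base_group p \<noteq> {}"
    using swapped_in_swapped_part[OF translation_in_Hmaps translation_in_Hmaps]
    by (auto simp: carrier_minus_base_group)
qed

lemma wreath_group_maps_Omega:
  assumes "g \<in> wreath_group p"
  shows "g \<in> Omega p \<rightarrow> Omega p"
proof -
  consider h1 h2 where "h1 \<in> Hmaps p" "h2 \<in> Hmaps p" "g = coordwise p h1 h2"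
    | h1 h2 where "h1 \<in> Hmaps p" "h2 \<in> Hmaps p" "g = swapped p h1 h2"
    using assms unfolding wreath_group_eq by (blast elim: base_groupE swapped_partE)
  then show ?thesis
    by cases (auto simp: coordwise_def swapped_def Omega_def dest!: Hmaps_range)
qed

lemma bij_betw_wreath_group: "g \<in> wreath_group p \<Longrightarrow> bij_betw g (Omega p) (Omega p)"
proof -
  assume g: "g \<in> wreath_group p"
  then obtain f where f: "f \<in> wreath_group p" "f \<circ> g = id" "g \<circ> f = id"
    by (rule wreath_group_inverse)
  show ?thesis
  proof (rule bij_betwI[where g = f])
    show "g \<in> Omega p \<rightarrow> Omega p" "f \<in> Omega p \<rightarrow> Omega p"
      using wreath_group_maps_Omega g f(1) by blast+
    show "f (g x) = x" "g (f y) = y" for x y using f(2,3) by (metis comp_apply id_apply)+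
  qed
qed


end

definition line_block :: "int \<Rightarrow> int \<Rightarrow> int \<Rightarrow> (int \<times> int) set" where
  "line_block p l c = {z \<in> Omega p. [fst z + l * snd z = c] (mod p)}"

definition line_partition :: "int \<Rightarrow> int \<Rightarrow> (int \<times> int) set set" where
  "line_partition p l = line_block p l ` Fp p"

lemma card_line_block:
  assumes "0 < p" "c \<in> Fp p"
  shows "card (line_block p l c) = nat p"
proof -
  have "bij_betw snd (line_block p l c) (Fp p)"
    unfolding bij_betw_def
  proof
    show "inj_on snd (line_block p l c)"
    proof (rule inj_onI)
      fix z z' assume z: "z \<in> line_block p l c" "z' \<in> line_block p l c" "snd z = snd z'"
      then have "[fst z + l * snd z = c] (mod p)" "[fst z' + l * snd z = c] (mod p)"
        by (simp_all add: line_block_def)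
      then have "[fst z + l * snd z = fst z' + l * snd z] (mod p)" using cong_sym cong_trans by blast
      then have "[fst z = fst z'] (mod p)" by (simp only: cong_add_rcancel)
      then have "fst z = fst z'"
        using z(1,2) by (intro cong_less_imp_eq_int) (auto simp: line_block_def Omega_def Fp_def)
      then show "z = z'" using z(3) by (simp add: prod_eq_iff)
    qed
    show "snd ` line_block p l c = Fp p"
    proof
      show "snd ` line_block p l c \<subseteq> Fp p" by (auto simp: line_block_def Omega_def)
      show "Fp p \<subseteq> snd ` line_block p l c"
      proof
        fix y assume "y \<in> Fp p"
        moreover have "[(c - l * y) mod p + l * y = c] (mod p)"
          by (simp add: cong_def mod_add_left_eq)
        ultimately have "((c - l * y) mod p, y) \<in> line_block p l c"
          using assms(1) by (simp add: line_block_def Omega_def mod_in_Fp)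
        then show "y \<in> snd ` line_block p l c" by (rule rev_image_eqI) simp
      qed
    qed
  qed
  then show ?thesis by (simp add: bij_betw_same_card Fp_def)
qed

lemma block_system_line_partition:
  assumes "1 < p"
  shows "block_system (Omega p) (line_partition p l) (nat p)"
  unfolding block_system_def
proof (intro conjI)
  show "partition_on (Omega p) (line_partition p l)"
  proof (rule partition_onI)
    show "\<Union> (line_partition p l) = Omega p"
    proof
      show "\<Union> (line_partition p l) \<subseteq> Omega p" by (auto simp: line_partition_def line_block_def)
      show "Omega p \<subseteq> \<Union> (line_partition p l)"
      proof
        fix z assume "z \<in> Omega p"
        then have "z \<in> line_block p l ((fst z + l * snd z) mod p)" by (simp add: line_block_def)
        moreover have "line_block p l ((fst z + l * snd z) mod p) \<in> line_partition p l"
          unfolding line_partition_def using assms by (simp add: mod_in_Fp)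
        ultimately show "z \<in> \<Union> (line_partition p l)" by blast
      qed
    qed
    show "disjnt B C"
      if BP: "B \<in> line_partition p l" and CP: "C \<in> line_partition p l" and BC: "B \<noteq> C" for B C
    proof -
      obtain c c' where c: "c \<in> Fp p" "c' \<in> Fp p" and B: "B = line_block p l c"
        and C: "C = line_block p l c'"
        using BP CP unfolding line_partition_def by blast
      have "c = c'" if "z \<in> B" "z \<in> C" for z
      proof (rule cong_less_imp_eq_int)
        have "[fst z + l * snd z = c] (mod p)" "[fst z + l * snd z = c'] (mod p)"
          using that by (simp_all add: B C line_block_def)
        then show "[c = c'] (mod p)" using cong_sym cong_trans by blast
      qed (use c in \<open>simp_all add: Fp_def\<close>)
      then show ?thesis using BC unfolding B C disjnt_def by blast
    qed
    show "{} \<notin> line_partition p l"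
    proof
      assume "{} \<in> line_partition p l"
      then obtain c where "c \<in> Fp p" "line_block p l c = {}" unfolding line_partition_def by auto
      then show False using card_line_block[of p c l] assms by simp
    qed
  qed
  show "\<forall>B\<in>line_partition p l. card B = nat p"
    using card_line_block assms unfolding line_partition_def by auto
  show "1 < nat p" using assms by simp
  show "nat p < card (Omega p)"
    using assms card_Omega[of p] by (simp add: power2_eq_square nat_mult_distrib)
qed

lemma coordwise_maps_line_block:
  assumes "h2 \<in> Fp p \<rightarrow> Fp p"
  shows "coordwise p (affine p a b) h2 ` line_block p 0 c \<subseteq> line_block p 0 ((a * c + b) mod p)"
proof (rule image_subsetI)
  fix z assume z: "z \<in> line_block p 0 c"
  obtain x y where [simp]: "z = (x, y)" by (cases z)
  from z have xy: "(x, y) \<in> Omega p" "[x = c] (mod p)" by (simp_all add: line_block_def)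
  have "[affine p a b x = a * x + b] (mod p)" by (rule cong_affine)
  also have "[a * x + b = a * c + b] (mod p)" using xy(2) by (intro cong_add cong_scalar_left cong_refl)
  finally have "[affine p a b x = a * c + b] (mod p)" .
  then show "coordwise p (affine p a b) h2 z \<in> line_block p 0 ((a * c + b) mod p)"
    using xy(1) assms by (auto simp: coordwise_def line_block_def Omega_def affine_def Fp_def)
qed

text \<open>If \<open>a\<^sub>1 = l\<^sup>2 a\<^sub>2\<close>, then \<open>(x, y) \<mapsto> (a\<^sub>1 y + b\<^sub>1, a\<^sub>2 x + b\<^sub>2)\<close> multiplies
  \<open>x + l y\<close> by \<open>l a\<^sub>2\<close> up to a constant.\<close>

lemma swapped_maps_line_block:
  assumes "[a1 = l ^ 2 * a2] (mod p)"
  shows "swapped p (affine p a1 b1) (affine p a2 b2) ` line_block p l c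
    \<subseteq> line_block p l ((l * a2 * c + b1 + l * b2) mod p)"
proof (rule image_subsetI)
  fix z assume z: "z \<in> line_block p l c"
  obtain x y where [simp]: "z = (x, y)" by (cases z)
  from z have xy: "(x, y) \<in> Omega p" "[x + l * y = c] (mod p)" by (simp_all add: line_block_def)
  have "[affine p a1 b1 y + l * affine p a2 b2 x = (a1 * y + b1) + l * (a2 * x + b2)] (mod p)"
    by (intro cong_add cong_scalar_left cong_affine)
  also have "[(a1 * y + b1) + l * (a2 * x + b2) = (l ^ 2 * a2 * y + b1) + l * (a2 * x + b2)] (mod p)"
    using assms by (intro cong_add cong_scalar_right cong_refl)
  also have "(l ^ 2 * a2 * y + b1) + l * (a2 * x + b2) = l * a2 * (x + l * y) + b1 + l * b2"
    by (simp add: algebra_simps power2_eq_square)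
  also have "[l * a2 * (x + l * y) + b1 + l * b2 = l * a2 * c + b1 + l * b2] (mod p)"
    using xy(2) by (intro cong_add cong_scalar_left cong_refl)
  finally show "swapped p (affine p a1 b1) (affine p a2 b2) z
    \<in> line_block p l ((l * a2 * c + b1 + l * b2) mod p)"
    using xy(1) by (auto simp: swapped_def line_block_def Omega_def affine_def Fp_def)
qed

locale swap_invariant_submonoid = prime_modulus +
  fixes B :: "(int \<times> int) set"
  assumes subset_Omega: "B \<subseteq> Omega p"
    and zero_in: "(0, 0) \<in> B"
    and add_closed: "\<And>u v x y. (u, v) \<in> B \<Longrightarrow> (x, y) \<in> B \<Longrightarrow> ((x + u) mod p, (y + v) mod p) \<in> B"
    and swap_closed: "\<And>x y. (x, y) \<in> B \<Longrightarrow> (y, x) \<in> B"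
begin

lemma multiple_in:
  assumes "(u, v) \<in> B"
  shows "((int k * u) mod p, (int k * v) mod p) \<in> B"
proof (induction k)
  case 0
  then show ?case using zero_in by simp
next
  case (Suc k)
  have "((u + (int k * u) mod p) mod p, (v + (int k * v) mod p) mod p) \<in> B"
    using add_closed[OF Suc.IH assms] by (simp add: add.commute)
  then show ?case by (simp add: mod_add_right_eq algebra_simps)
qed

lemma axis_in:
  assumes w: "(w, 0) \<in> B" "w \<in> Fp p" "w \<noteq> 0" and x: "x \<in> Fp p"
  shows "(x, 0) \<in> B"
proof -
  have "\<not> p dvd w" using w(2,3) zdvd_not_zless[of w p] by (auto simp: Fp_def)
  then obtain w' where w': "[w * w' = 1] (mod p)" by (rule inverse_mod)
  define k where "k = nat ((x * w') mod p)"
  have k: "int k = (x * w') mod p" unfolding k_def using gt_one by simp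
  have "[int k * w = x * w' * w] (mod p)" unfolding k by (rule cong_scalar_right) simp
  also have "x * w' * w = x * (w * w')" by (simp add: ac_simps)
  also have "[x * (w * w') = x * 1] (mod p)" using w' by (rule cong_scalar_left)
  finally have "(int k * w) mod p = x" using x by (simp add: cong_def Fp_def)
  then show ?thesis using multiple_in[OF w(1), of k] by simp
qed

lemma eq_Omega_if_axis_point:
  assumes "(w, 0) \<in> B" "w \<in> Fp p" "w \<noteq> 0"
  shows "B = Omega p"
proof
  show "Omega p \<subseteq> B"
  proof
    fix z assume "z \<in> Omega p"
    then obtain x y where z: "z = (x, y)" "x \<in> Fp p" "y \<in> Fp p" by (auto simp: Omega_def)
    have "(x, 0) \<in> B" "(0, y) \<in> B" using axis_in[OF assms] swap_closed z by auto
    then show "z \<in> B" using add_closed[of 0 y x 0] z by (simp add: Fp_def)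
  qed
qed (rule subset_Omega)

text \<open>Subtracting \<open>(u, v)\<close> from \<open>(4 u, v)\<close> gives the axis point \<open>(3 u, 0)\<close>,
  which is nonzero because \<open>p \<ge> 5\<close>.\<close>

lemma eq_Omega_if_scaling_closed:
  assumes p5: "5 \<le> p"
    and scale_closed: "\<And>x y. (x, y) \<in> B \<Longrightarrow> ((4 * x) mod p, y) \<in> B"
    and z: "z \<in> B" "z \<noteq> (0, 0)"
  shows "B = Omega p"
proof -
  obtain u v where uv: "z = (u, v)" "u \<in> Fp p" "v \<in> Fp p" using z(1) subset_Omega by (auto simp: Omega_def)
  have "\<exists>w. (w, 0) \<in> B \<and> w \<in> Fp p \<and> w \<noteq> 0"
  proof (cases "u = 0 \<or> v = 0")
    case True
    then show ?thesis using z uv swap_closed by auto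
  next
    case False
    have "(((p - 1) * u) mod p, ((p - 1) * v) mod p) \<in> B"
      using multiple_in[OF z(1)[unfolded uv(1)], of "nat (p - 1)"] gt_one by simp
    from add_closed[OF this scale_closed[OF z(1)[unfolded uv(1)]]]
    have "(((4 * u) mod p + (p - 1) * u mod p) mod p, (v + (p - 1) * v mod p) mod p) \<in> B" .
    moreover have "((4 * u) mod p + (p - 1) * u mod p) mod p = (3 * u + p * u) mod p"
      by (simp add: mod_add_eq algebra_simps)
    moreover have "(v + (p - 1) * v mod p) mod p = (p * v) mod p"
      by (simp add: mod_add_right_eq algebra_simps)
    ultimately have "((3 * u) mod p, 0) \<in> B" by simp
    moreover have "\<not> p dvd 3 * u"
      using False uv(2) p5 prime zdvd_not_zless[of 3 p] zdvd_not_zless[of u p]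
      by (auto simp: Fp_def prime_dvd_mult_iff)
    ultimately show ?thesis using gt_one by (auto simp: mod_in_Fp dvd_eq_mod_eq_0)
  qed
  then show ?thesis using eq_Omega_if_axis_point by blast
qed

end

context prime_modulus
begin

lemma preserves_line_partition:
  assumes g: "g \<in> wreath_group p"
    and into: "\<And>c. c \<in> Fp p \<Longrightarrow> \<exists>c'\<in>Fp p. g ` line_block p l c \<subseteq> line_block p l c'"
  shows "preserves g (line_partition p l)"
proof (rule preserves_if_blocks_map_into_blocks)
  have "\<Union> (line_partition p l) \<subseteq> Omega p" by (auto simp: line_partition_def line_block_def)
  with bij_betw_imp_inj_on[OF bij_betw_wreath_group[OF g]]
  show "inj_on g (\<Union> (line_partition p l))" by (rule inj_on_subset)
  show "finite B \<and> card B = nat p" if "B \<in> line_partition p l" for B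
    using that card_line_block[of p] gt_one card_ge_0_finite[of B] unfolding line_partition_def by auto
  show "\<exists>C\<in>line_partition p l. g ` B \<subseteq> C" if "B \<in> line_partition p l" for B
    using that into unfolding line_partition_def by blast
qed

lemma base_group_preserves_rows:
  assumes "g \<in> base_group p"
  shows "preserves g (line_partition p 0)"
proof -
  obtain h1 h2 where h: "h1 \<in> Hmaps p" "h2 \<in> Hmaps p" "g = coordwise p h1 h2"
    using assms by (rule base_groupE)
  obtain a b where ab: "h1 = affine p a b" using h(1) by (rule HmapsE)
  show ?thesis
  proof (rule preserves_line_partition)
    show "g \<in> wreath_group p" using assms unfolding wreath_group_eq by blast
    show "\<exists>c'\<in>Fp p. g ` line_block p 0 c \<subseteq> line_block p 0 c'" for c
      using coordwise_maps_line_block[OF Hmaps_range[OF h(2)], of a b c] h(3) ab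
        mod_in_Fp[OF pos]
      by auto
  qed
qed

lemma swapped_part_preserves_lines:
  assumes "g \<in> swapped_part p"
  obtains l where "preserves g (line_partition p l)"
proof -
  obtain h1 h2 where h: "h1 \<in> Hmaps p" "h2 \<in> Hmaps p" "g = swapped p h1 h2"
    using assms by (rule swapped_partE)
  obtain a1 b1 where h1: "h1 = affine p a1 b1" "\<not> p dvd a1" "QuadRes p a1" using h(1) by (rule HmapsE)
  obtain a2 b2 where h2: "h2 = affine p a2 b2" "\<not> p dvd a2" "QuadRes p a2" using h(2) by (rule HmapsE)
  obtain l where l: "[a1 = l ^ 2 * a2] (mod p)" using h2(2) h1(3) h2(3) by (rule square_ratio)
  have "preserves g (line_partition p l)"
  proof (rule preserves_line_partition)
    show "g \<in> wreath_group p" using assms unfolding wreath_group_eq by blast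
    show "\<exists>c'\<in>Fp p. g ` line_block p l c \<subseteq> line_block p l c'" for c
      using swapped_maps_line_block[OF l, of b1 b2 c] h(3) h1(1) h2(1)
        mod_in_Fp[OF pos]
      by auto
  qed
  then show ?thesis by (rule that)
qed

lemma imprimitive_perm_wreath_group:
  assumes "g \<in> wreath_group p"
  shows "imprimitive_perm (Omega p) g"
proof -
  obtain l where "preserves g (line_partition p l)"
    using assms base_group_preserves_rows swapped_part_preserves_lines
    unfolding wreath_group_eq by blast
  then show ?thesis
    unfolding imprimitive_perm_def using block_system_line_partition[OF gt_one] by blast
qed

lemma translation_apply:
  "(x, y) \<in> Omega p \<Longrightarrow> coordwise p (affine p 1 u) (affine p 1 v) (x, y) = ((x + u) mod p, (y + v) mod p)"
  by (simp add: coordwise_def affine_def add.commute)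

lemma translation_in_wreath_group: "coordwise p (affine p 1 u) (affine p 1 v) \<in> wreath_group p"
  unfolding wreath_group_eq using coordwise_in_base_group translation_in_Hmaps by blast

lemma coordinate_swap_apply: "(x, y) \<in> Omega p \<Longrightarrow> swapped p (affine p 1 0) (affine p 1 0) (x, y) = (y, x)"
  by (simp add: swapped_def Omega_def affine_one_zero_on_Fp)

lemma coordinate_swap_in_wreath_group: "swapped p (affine p 1 0) (affine p 1 0) \<in> wreath_group p"
  unfolding wreath_group_eq using swapped_in_swapped_part translation_in_Hmaps by blast

lemma scaling_apply: "(x, y) \<in> Omega p \<Longrightarrow> coordwise p (affine p a 0) (affine p 1 0) (x, y) = ((a * x) mod p, y)"
  by (simp add: coordwise_def affine_def Omega_def Fp_def)

lemma square_scaling_in_wreath_group: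
  "\<not> p dvd a \<Longrightarrow> coordwise p (affine p (a ^ 2) 0) (affine p 1 0) \<in> wreath_group p"
  unfolding wreath_group_eq
  using affine_in_Hmaps[OF _ QuadRes_square] coordwise_in_base_group translation_in_Hmaps prime
  by (simp add: prime_dvd_power_iff)

lemma zero_in_Omega: "(0, 0) \<in> Omega p"
  using gt_one by (simp add: Omega_def Fp_def)

lemma transitive_on_base_group: "transitive_on (Omega p) (base_group p)"
  unfolding transitive_on_def
proof (intro ballI)
  fix z z' assume "z \<in> Omega p" "z' \<in> Omega p"
  then obtain x y x' y' where z: "z = (x, y)" "z \<in> Omega p" and z': "z' = (x', y')" "z' \<in> Omega p"
    by (auto simp: Omega_def)
  let ?t = "coordwise p (affine p 1 (x' - x)) (affine p 1 (y' - y))"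
  have "?t \<in> base_group p" by (intro coordwise_in_base_group translation_in_Hmaps)
  moreover have "?t z = z'" using z z' by (simp add: translation_apply Omega_def Fp_def)
  ultimately show "\<exists>g\<in>base_group p. g z = z'" by blast
qed

lemma imprimitive_group_base_group: "imprimitive_group (Omega p) (base_group p)"
  unfolding imprimitive_group_def
  using transitive_on_base_group block_system_line_partition[OF gt_one] base_group_preserves_rows
  by blast

lemma invariant_block_stable:
  assumes P: "partition_on (Omega p) P" "\<forall>g\<in>wreath_group p. preserves g P"
    and B: "B \<in> P" "(0, 0) \<in> B"
    and g: "g \<in> wreath_group p" "g (0, 0) \<in> B"
    and z: "z \<in> B"
  shows "g z \<in> B"
  using preserved_block_fixed[OF P(1) bspec[OF P(2) g(1)] B g(2)] z by blast

lemma swap_invariant_submonoid_if_invariant_block: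
  assumes P: "partition_on (Omega p) P" "\<forall>g\<in>wreath_group p. preserves g P"
    and B: "B \<in> P" "(0, 0) \<in> B"
  shows "swap_invariant_submonoid p B"
proof
  show B_Omega: "B \<subseteq> Omega p" using P(1) B(1) partition_onD1 by blast
  show "(0, 0) \<in> B" by (rule B(2))
  fix u v x y assume uv: "(u, v) \<in> B" and xy: "(x, y) \<in> B"
  then have "coordwise p (affine p 1 u) (affine p 1 v) (0, 0) = (u, v)"
    using B_Omega translation_apply[OF zero_in_Omega] by (auto simp: Omega_def Fp_def)
  then show "((x + u) mod p, (y + v) mod p) \<in> B"
    using invariant_block_stable[OF P B translation_in_wreath_group _ xy] uv xy B_Omega
    by (auto simp: translation_apply)
next
  fix x y assume xy: "(x, y) \<in> B"
  have "B \<subseteq> Omega p" using P(1) B(1) partition_onD1 by blast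
  then show "(y, x) \<in> B"
    using invariant_block_stable[OF P B coordinate_swap_in_wreath_group _ xy] xy B(2)
    by (auto simp: coordinate_swap_apply zero_in_Omega)
qed

lemma invariant_block_scaling_closed:
  assumes p5: "5 \<le> p"
    and P: "partition_on (Omega p) P" "\<forall>g\<in>wreath_group p. preserves g P"
    and B: "B \<in> P" "(0, 0) \<in> B" and xy: "(x, y) \<in> B"
  shows "((4 * x) mod p, y) \<in> B"
proof -
  have "\<not> p dvd 2" using p5 zdvd_not_zless[of 2 p] by simp
  then have "coordwise p (affine p (2 ^ 2) 0) (affine p 1 0) \<in> wreath_group p"
    by (rule square_scaling_in_wreath_group)
  moreover have "B \<subseteq> Omega p" using P(1) B(1) partition_onD1 by blast
  ultimately have "coordwise p (affine p 4 0) (affine p 1 0) (x, y) \<in> B"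
    using invariant_block_stable[OF P B _ _ xy] B(2) by (simp add: scaling_apply zero_in_Omega)
  moreover have "(x, y) \<in> Omega p" using \<open>B \<subseteq> Omega p\<close> xy by blast
  ultimately show ?thesis by (simp add: scaling_apply)
qed

lemma primitive_wreath_group:
  assumes "5 \<le> p"
  shows "primitive_group (Omega p) (wreath_group p)"
  unfolding primitive_group_def
proof
  show "transitive_on (Omega p) (wreath_group p)"
    using transitive_on_base_group unfolding transitive_on_def wreath_group_eq by blast
  show "\<not> (\<exists>P m. block_system (Omega p) P m \<and> (\<forall>g\<in>wreath_group p. preserves g P))"
  proof
    assume "\<exists>P m. block_system (Omega p) P m \<and> (\<forall>g\<in>wreath_group p. preserves g P)"
    then obtain P m where P: "partition_on (Omega p) P" "\<forall>g\<in>wreath_group p. preserves g P"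
      and sizes: "\<forall>B\<in>P. card B = m" "1 < m" "m < card (Omega p)"
      unfolding block_system_def by blast
    obtain B where B: "B \<in> P" "(0, 0) \<in> B" using partition_onD1[OF P(1)] zero_in_Omega by blast
    have "\<not> B \<subseteq> {(0, 0)}"
    proof
      assume "B \<subseteq> {(0, 0)}"
      then have "card B \<le> 1" using card_mono[of "{(0, 0)}" B] by simp
      then show False using sizes B(1) by auto
    qed
    then obtain z where "z \<in> B" "z \<noteq> (0, 0)" by blast
    interpret swap_invariant_submonoid p B
      by (rule swap_invariant_submonoid_if_invariant_block[OF P B])
    have "B = Omega p"
      using eq_Omega_if_scaling_closed[OF assms _ \<open>z \<in> B\<close> \<open>z \<noteq> (0, 0)\<close>]
        invariant_block_scaling_closed[OF assms P B] by blast
    then show False using sizes B(1) by auto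
  qed
qed

end

theorem mainTheorem8:
  fixes p :: int
  assumes "Factorial_Ring.prime p" and "p \<ge> 5"
  shows "group (perm_grp (wreath_group p))
    \<and> (\<forall>g\<in>wreath_group p. bij_betw g (Omega p) (Omega p))
    \<and> card (Omega p) = nat (p ^ 2)
    \<and> primitive_group (Omega p) (wreath_group p)
    \<and> (\<forall>g\<in>wreath_group p. imprimitive_perm (Omega p) g)
    \<and> base_group p \<lhd> perm_grp (wreath_group p)
    \<and> card (rcosets\<^bsub>perm_grp (wreath_group p)\<^esub> (base_group p)) = 2
    \<and> imprimitive_group (Omega p) (base_group p)"
proof -
  interpret prime_modulus p by (rule prime_modulus.intro) fact
  show ?thesis
    using group_wreath_group bij_betw_wreath_group card_Omega[of p] pos
      primitive_wreath_group[OF assms(2)] imprimitive_perm_wreath_group normal_base_group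
      card_rcosets_base_group imprimitive_group_base_group
    by simp
qed

end
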